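(* Let $n\ge 2$ and $1\le k\le n-1$. Let $L\in\mathbb{R}^{n\times n}$ be the Laplacian matrix of an undirected weighted graph on $n$ nodes, with eigenvalues $\lambda_1(L)\le\lambda_2(L)\le\cdots\le\lambda_n(L)$ and an associated orthonormal family of real eigenvectors $v_1(L),\dots,v_n(L)$. Let $g_1(s),\dots,g_n(s)$ and $f(s)$ be scalar transfer functions, $G(s)=\mathrm{diag}\{g_i(s)\}_{i=1}^n$, and define $$T_{yu}(s)=(I_n+G(s)f(s)L)^{-1}G(s),\qquad T_k(s)=V_k\big(V_k^TG^{-1}(s)V_k+f(s)\Lambda_k\big)^{-1}V_k^T,$$ where $V_k=[v_1(L)\ \cdots\ v_k(L)]$ and $\Lambda_k=\mathrm{diag}\{\lambda_i(L)\}_{i=1}^k$. Let $s_0\in\mathbb{C}$ be a point that is not a pole of $f(s)$ and such that the two quantities $$M_1:=\|T_k(s_0)\|,\qquad M_2:=\max_{1\le i\le n}|g_i^{-1}(s_0)|$$ are finite. Then whenever $|f(s_0)|\,\lambda_{k+1}(L)>M_2+M_1M_2^2$, the following inequality holds: $$\|T_{yu}(s_0)-T_k(s_0)\|\le\frac{(M_1M_2+1)^2}{|f(s_0)|\,\lambda_{k+1}(L)-M_2-M_1M_2^2}.$$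
   Context: $\|\cdot\|$ denotes the spectral norm of a matrix. $T_{yu}(s)$ is the transfer matrix from input $u$ to output $y$ of the feedback interconnection of the nodal dynamics $G(s)$ with the network coupling $f(s)L$ (negative feedback). $\lambda_i(L)$ denotes the $i$-th smallest eigenvalue of $L$. *)

theory Defs
  imports "HOL-Analysis.Analysis"
begin

definition laplacian_of :: "('n::finite \<Rightarrow> 'n \<Rightarrow> real) \<Rightarrow> real^'n^'n" where
  "laplacian_of w = (\<chi> i j. if i = j then (\<Sum>l\<in>UNIV - {i}. w i l) else - w i j)"

definition is_graph_laplacian :: "real^'n::finite^'n \<Rightarrow> bool" where
  "is_graph_laplacian L \<longleftrightarrow>
     (\<exists>w. (\<forall>i j. w i j = w j i) \<and> (\<forall>i j. 0 \<le> w i j) \<and> L = laplacian_of w)"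

definition spec_norm :: "complex^'n::finite^'m::finite \<Rightarrow> real" where
  "spec_norm A = onorm (\<lambda>x. A *v x)"

definition cmat_of_real :: "real^'n::finite^'m::finite \<Rightarrow> complex^'n^'m" where
  "cmat_of_real A = (\<chi> i j. complex_of_real (A $ i $ j))"

definition cdiag :: "('n::finite \<Rightarrow> complex) \<Rightarrow> complex^'n^'n" where
  "cdiag d = (\<chi> i j. if i = j then d i else 0)"

definition cscale :: "complex \<Rightarrow> complex^'n::finite^'m::finite \<Rightarrow> complex^'n^'m" where
  "cscale c A = (\<chi> i j. c * A $ i $ j)"

end

theory Submission
  imports Defs
begin

(* Write B = G^-1 + f L, so that T_yu = (I + G f L)^-1 G = B^-1, and split C^n orthogonally into
   the range of V = V_k and ker V^T; since L V = V Lambda_k, the compression V^T B V is exactly the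
   matrix A = V^T G^-1 V + f Lambda_k inverted in T_k = V A^-1 V^T.
   A vector x with V^T B x = 0 is determined by its component z in ker V^T, namely
   x = z - T_k G^-1 z, and on ker V^T the coupling dominates, |f L z| >= |f| lambda_(k+1) |z|.
   This Schur-complement bound gives |B x| >= c |z| with c = |f| lambda_(k+1) - M2 - M1 M2^2 > 0,
   hence invertibility of B. For x = (B^-1 - T_k) w the residual B x = w - B T_k w lies in ker V^T
   and has norm at most (1 + M1 M2) |w|, while |x| <= (1 + M1 M2) |z|; together
   |x| <= (1 + M1 M2)^2 |w| / c. *)

lemma matrix_inv_right:
  fixes A :: "'a::semiring_1^'n::finite^'m::finite"
  assumes "invertible A"
  shows "A ** matrix_inv A = mat 1"
  using someI_ex[OF assms[unfolded invertible_def]] unfolding matrix_inv_def by blast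

lemma matrix_inv_left:
  fixes A :: "'a::semiring_1^'n::finite^'m::finite"
  assumes "invertible A"
  shows "matrix_inv A ** A = mat 1"
  using someI_ex[OF assms[unfolded invertible_def]] unfolding matrix_inv_def by blast

lemma feedback_inverse:
  fixes G H C :: "'a::field^'n::finite^'n"
  assumes GH: "G ** H = mat 1" and inv: "invertible (H + C)"
  shows "invertible (mat 1 + G ** C)"
    and "matrix_inv (mat 1 + G ** C) ** G = matrix_inv (H + C)"
proof -
  have factor: "mat 1 + G ** C = G ** (H + C)"
    by (simp add: matrix_add_ldistrib GH)
  have "invertible G"
    using GH invertible_right_inverse by blast
  then show inv1: "invertible (mat 1 + G ** C)"
    unfolding factor using inv invertible_mult by blast
  have left_inverse: "matrix_inv (mat 1 + G ** C) ** G ** (H + C) = mat 1"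
    using matrix_inv_left[OF inv1] by (simp add: factor matrix_mul_assoc)
  have "matrix_inv (mat 1 + G ** C) ** G
      = matrix_inv (mat 1 + G ** C) ** G ** ((H + C) ** matrix_inv (H + C))"
    by (simp add: matrix_inv_right[OF inv])
  also have "\<dots> = matrix_inv (H + C)"
    by (simp only: matrix_mul_assoc left_inverse matrix_mul_lid)
  finally show "matrix_inv (mat 1 + G ** C) ** G = matrix_inv (H + C)" .
qed

lemma norm_mv_le_spec_norm: "norm (A *v x) \<le> spec_norm A * norm x"
  unfolding spec_norm_def by (rule onorm[OF matrix_vector_mul_bounded_linear])

lemma spec_norm_nonneg: "0 \<le> spec_norm A"
  unfolding spec_norm_def by (rule onorm_pos_le[OF matrix_vector_mul_bounded_linear])

lemma spec_norm_le: "(\<And>x. norm (A *v x) \<le> b * norm x) \<Longrightarrow> spec_norm A \<le> b"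
  unfolding spec_norm_def by (rule onorm_le)

lemma norm_vec_power2: "norm (x :: 'a::real_normed_vector^'n::finite) ^ 2 = (\<Sum>i\<in>UNIV. norm (x $ i) ^ 2)"
  by (simp add: norm_vec_def L2_set_def sum_nonneg)

lemma norm_smult_complex_vec: "norm (c *s (x :: complex^'n::finite)) = cmod c * norm x"
proof -
  have "norm (c *s x) ^ 2 = (cmod c * norm x) ^ 2"
    by (simp add: norm_vec_power2 power_mult_distrib norm_mult sum_distrib_left)
  then show ?thesis
    by (rule power2_eq_imp_eq) simp_all
qed

lemma cscale_mv: "cscale c A *v x = c *s (A *v x)"
  by (simp add: cscale_def matrix_vector_mult_def vec_eq_iff sum_distrib_left mult.assoc)

lemma cdiag_mv: "cdiag d *v x = (\<chi> i. d i * x $ i)"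
  by (simp add: cdiag_def matrix_vector_mult_def vec_eq_iff if_distrib[of "\<lambda>a. a * _"] cong: if_cong)

lemma cdiag_mult: "cdiag a ** cdiag b = cdiag (\<lambda>i. a i * b i)"
  by (simp add: cdiag_def matrix_matrix_mult_def vec_eq_iff if_distrib[of "\<lambda>a. a * _"] cong: if_cong)

lemma transpose_cdiag: "transpose (cdiag d) = cdiag d"
  by (simp add: cdiag_def transpose_def vec_eq_iff)

lemma norm_cdiag_mv_le: "norm (cdiag d *v x) \<le> (MAX i. cmod (d i)) * norm x"
proof -
  let ?M = "MAX i. cmod (d i)"
  have d_le: "cmod (d i) \<le> ?M" for i
    by simp
  have "norm (cdiag d *v x) ^ 2 = (\<Sum>i\<in>UNIV. cmod (d i) ^ 2 * cmod (x $ i) ^ 2)"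
    by (simp add: cdiag_mv norm_vec_power2 norm_mult power_mult_distrib)
  also have "\<dots> \<le> (\<Sum>i\<in>UNIV. ?M ^ 2 * cmod (x $ i) ^ 2)"
    by (intro sum_mono mult_right_mono power_mono d_le) simp_all
  also have "\<dots> = (?M * norm x) ^ 2"
    by (simp add: norm_vec_power2 power_mult_distrib sum_distrib_left)
  finally show ?thesis
    using norm_ge_zero order_trans[OF _ d_le] by (auto intro: power2_le_imp_le)
qed

lemma cmat_of_real_mult: "cmat_of_real (A ** B) = cmat_of_real A ** cmat_of_real B"
  by (simp add: cmat_of_real_def matrix_matrix_mult_def vec_eq_iff)

lemma transpose_cmat_of_real: "transpose (cmat_of_real A) = cmat_of_real (transpose A)"
  by (simp add: cmat_of_real_def transpose_def vec_eq_iff)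

lemma cmat_of_real_mat_1: "cmat_of_real (mat 1) = mat 1"
  by (simp add: cmat_of_real_def mat_def vec_eq_iff)

lemma cmat_of_real_adjoint: "(cmat_of_real A *v x) \<bullet> y = x \<bullet> (transpose (cmat_of_real A) *v y)"
proof -
  have "(cmat_of_real A *v x) \<bullet> y = (\<Sum>r\<in>UNIV. \<Sum>j\<in>UNIV. A $ r $ j * (x $ j \<bullet> y $ r))"
    by (simp add: inner_vec_def matrix_vector_mult_def cmat_of_real_def inner_sum_left
        scaleR_conv_of_real[symmetric])
  also have "\<dots> = (\<Sum>j\<in>UNIV. \<Sum>r\<in>UNIV. A $ r $ j * (x $ j \<bullet> y $ r))"
    by (rule sum.swap)
  also have "\<dots> = x \<bullet> (transpose (cmat_of_real A) *v y)"
    by (simp add: inner_vec_def matrix_vector_mult_def cmat_of_real_def inner_sum_right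
        transpose_def scaleR_conv_of_real[symmetric])
  finally show ?thesis .
qed

definition Re_vec :: "complex^'n::finite \<Rightarrow> real^'n" where
  "Re_vec z = (\<chi> r. Re (z $ r))"

definition Im_vec :: "complex^'n::finite \<Rightarrow> real^'n" where
  "Im_vec z = (\<chi> r. Im (z $ r))"

lemma Re_vec_zero: "Re_vec 0 = 0"
  by (simp add: Re_vec_def vec_eq_iff)

lemma Im_vec_zero: "Im_vec 0 = 0"
  by (simp add: Im_vec_def vec_eq_iff)

lemma norm_power2_Re_Im_vec: "norm z ^ 2 = norm (Re_vec z) ^ 2 + norm (Im_vec z) ^ 2"
  by (simp add: Re_vec_def Im_vec_def norm_vec_power2 cmod_power2 sum.distrib)

lemma Re_vec_cmat_of_real_mv: "Re_vec (cmat_of_real A *v z) = A *v Re_vec z"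
  by (simp add: Re_vec_def vec_eq_iff matrix_vector_mult_def cmat_of_real_def Re_sum)

lemma Im_vec_cmat_of_real_mv: "Im_vec (cmat_of_real A *v z) = A *v Im_vec z"
  by (simp add: Im_vec_def vec_eq_iff matrix_vector_mult_def cmat_of_real_def Im_sum)

lemma cmat_of_real_mv_lower_bound:
  fixes A :: "real^'n::finite^'m::finite" and K :: "real^'n^'p::finite"
  assumes real_bound: "\<And>a. K *v a = 0 \<Longrightarrow> c * norm a \<le> norm (A *v a)"
    and ker: "cmat_of_real K *v z = 0"
  shows "c * norm z \<le> norm (cmat_of_real A *v z)"
proof (cases "c < 0")
  case True
  then show ?thesis
    by (metis mult_nonpos_nonneg norm_ge_zero order.trans less_imp_le)
next
  case False
  have "K *v Re_vec z = 0" "K *v Im_vec z = 0"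
    using ker by (metis Re_vec_cmat_of_real_mv Re_vec_zero, metis Im_vec_cmat_of_real_mv Im_vec_zero)
  then have "c * norm (Re_vec z) \<le> norm (A *v Re_vec z)" "c * norm (Im_vec z) \<le> norm (A *v Im_vec z)"
    using real_bound by blast+
  then have "(c * norm (Re_vec z)) ^ 2 + (c * norm (Im_vec z)) ^ 2
      \<le> norm (A *v Re_vec z) ^ 2 + norm (A *v Im_vec z) ^ 2"
    using False by (intro add_mono power_mono) auto
  then have "(c * norm z) ^ 2 \<le> norm (A *v Re_vec z) ^ 2 + norm (A *v Im_vec z) ^ 2"
    by (simp add: power_mult_distrib norm_power2_Re_Im_vec[of z] distrib_left)
  also have "\<dots> = norm (cmat_of_real A *v z) ^ 2"
    by (simp add: norm_power2_Re_Im_vec[of "cmat_of_real A *v z"] Re_vec_cmat_of_real_mv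
        Im_vec_cmat_of_real_mv)
  finally show ?thesis
    by (rule power2_le_imp_le) simp
qed

lemma orthonormal_expansion:
  fixes v :: "'i \<Rightarrow> 'a::euclidean_space"
  assumes I: "finite I" "card I = DIM('a)"
    and orth: "\<And>i j. i \<in> I \<Longrightarrow> j \<in> I \<Longrightarrow> v i \<bullet> v j = (if i = j then 1 else 0)"
  shows "a = (\<Sum>i\<in>I. (v i \<bullet> a) *\<^sub>R v i)"
proof -
  have "inj_on v I"
    by (rule inj_onI) (metis orth zero_neq_one)
  then have card: "card (v ` I) = dim (UNIV :: 'a set)"
    by (simp add: card_image I)
  have "independent (v ` I)"
    by (rule pairwise_orthogonal_independent)
      (use orth in \<open>fastforce simp: pairwise_def orthogonal_def\<close>)+
  then have spanning: "UNIV \<subseteq> span (v ` I)"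
    using card_eq_dim[of "v ` I" UNIV] card I(1) by simp
  define e where "e = a - (\<Sum>i\<in>I. (v i \<bullet> a) *\<^sub>R v i)"
  have "orthogonal e (v j)" if "j \<in> I" for j
  proof -
    have "v j \<bullet> (\<Sum>i\<in>I. (v i \<bullet> a) *\<^sub>R v i) = v j \<bullet> a"
      using that I(1)
      by (simp add: inner_sum_right orth[OF that] if_distrib[of "\<lambda>x. _ * x"] cong: if_cong)
    then have "orthogonal (v j) e"
      by (simp add: e_def orthogonal_def inner_diff_right)
    then show ?thesis
      by (simp add: orthogonal_commute)
  qed
  then have "orthogonal e e"
    using spanning by (intro orthogonal_to_span[of e "v ` I"]) auto
  then show ?thesis
    by (simp add: e_def orthogonal_def)
qed

lemma orthonormal_norm_power2:
  fixes v :: "'i \<Rightarrow> 'a::euclidean_space"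
  assumes "finite I" "card I = DIM('a)"
    and "\<And>i j. i \<in> I \<Longrightarrow> j \<in> I \<Longrightarrow> v i \<bullet> v j = (if i = j then 1 else 0)"
  shows "norm a ^ 2 = (\<Sum>i\<in>I. (v i \<bullet> a) ^ 2)"
proof -
  have "norm a ^ 2 = a \<bullet> (\<Sum>i\<in>I. (v i \<bullet> a) *\<^sub>R v i)"
    using orthonormal_expansion[OF assms, of a] by (simp add: power2_norm_eq_inner)
  then show ?thesis
    by (simp add: inner_sum_right inner_commute power2_eq_square)
qed

lemma norm_mv_ge_eigenvalue:
  fixes L :: "real^'n::finite^'n" and v :: "nat \<Rightarrow> real^'n" and lam :: "nat \<Rightarrow> real"
  assumes sym: "transpose L = L"
    and eig: "\<And>i. i \<in> {1..CARD('n)} \<Longrightarrow> L *v v i = lam i *s v i"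
    and orth: "\<And>i j. i \<in> {1..CARD('n)} \<Longrightarrow> j \<in> {1..CARD('n)} \<Longrightarrow>
                  v i \<bullet> v j = (if i = j then 1 else 0)"
    and sorted: "\<And>i j. i \<in> {1..CARD('n)} \<Longrightarrow> j \<in> {1..CARD('n)} \<Longrightarrow> i \<le> j \<Longrightarrow> lam i \<le> lam j"
    and k: "k < CARD('n)"
    and perp: "\<And>i. i \<in> {1..k} \<Longrightarrow> v i \<bullet> a = 0"
  shows "lam (k + 1) * norm a \<le> norm (L *v a)"
proof (cases "lam (k + 1) < 0")
  case True
  then show ?thesis
    by (metis mult_nonpos_nonneg norm_ge_zero order.trans less_imp_le)
next
  case False
  let ?I = "{1..CARD('n)}"
  have parseval: "norm x ^ 2 = (\<Sum>i\<in>?I. (v i \<bullet> x) ^ 2)" for x :: "real^'n"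
    by (rule orthonormal_norm_power2) (simp_all add: orth)
  have coeff: "v i \<bullet> (L *v a) = lam i * (v i \<bullet> a)" if "i \<in> ?I" for i
    by (metis dot_lmul_matrix eig[OF that] inner_scaleR_left scalar_mult_eq_scaleR sym
        transpose_matrix_vector)
  have "lam (k + 1) ^ 2 * (v i \<bullet> a) ^ 2 \<le> (lam i * (v i \<bullet> a)) ^ 2" if i: "i \<in> ?I" for i
  proof (cases "i \<le> k")
    case True
    then show ?thesis
      using perp i by simp
  next
    case False
    then have "lam (k + 1) \<le> lam i"
      using sorted[of "k + 1" i] i k by simp
    then show ?thesis
      using \<open>\<not> lam (k + 1) < 0\<close> by (simp add: power_mult_distrib mult_right_mono power_mono)
  qed
  then have "(\<Sum>i\<in>?I. lam (k + 1) ^ 2 * (v i \<bullet> a) ^ 2) \<le> (\<Sum>i\<in>?I. (lam i * (v i \<bullet> a)) ^ 2)"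
    by (rule sum_mono)
  then have "(lam (k + 1) * norm a) ^ 2 \<le> norm (L *v a) ^ 2"
    by (simp add: parseval[of a] parseval[of "L *v a"] power_mult_distrib sum_distrib_left coeff)
  then show ?thesis
    by (rule power2_le_imp_le) simp
qed

lemma transpose_columns_mv:
  fixes u :: "'k::finite \<Rightarrow> 'a::comm_semiring_1^'n::finite"
  shows "transpose (\<chi> r j. u j $ r :: 'a^'k^'n) *v a = (\<chi> j. \<Sum>r\<in>UNIV. u j $ r * a $ r)"
  by (simp add: transpose_def matrix_vector_mult_def)

lemma transpose_columns_mult_self:
  fixes u :: "'k::finite \<Rightarrow> real^'n::finite"
  assumes "\<And>i j. u i \<bullet> u j = (if i = j then 1 else 0)"
  shows "transpose (\<chi> r j. u j $ r) ** (\<chi> r j. u j $ r :: real^'k^'n) = mat 1"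
  using assms by (simp add: transpose_def matrix_matrix_mult_def mat_def inner_vec_def vec_eq_iff)

lemma eigenvector_columns:
  fixes L :: "real^'n::finite^'n" and u :: "'k::finite \<Rightarrow> real^'n"
  assumes "\<And>j. L *v u j = \<mu> j *s u j"
  shows "cmat_of_real L ** cmat_of_real (\<chi> r j. u j $ r :: real^'k^'n)
       = cmat_of_real (\<chi> r j. u j $ r :: real^'k^'n) ** cdiag (\<lambda>j. complex_of_real (\<mu> j))"
proof -
  have "(\<Sum>s\<in>UNIV. complex_of_real (L $ r $ s) * complex_of_real (u j $ s))
      = complex_of_real (u j $ r) * complex_of_real (\<mu> j)" for r j
    using arg_cong[OF assms[of j], of "\<lambda>x. complex_of_real (x $ r)"]
    by (simp add: matrix_vector_mult_def mult.commute)
  then show ?thesis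
    by (simp add: cmat_of_real_def cdiag_def matrix_matrix_mult_def vec_eq_iff
        if_distrib[of "\<lambda>x. _ * x"] cong: if_cong)
qed

lemma graph_laplacian_symmetric: "is_graph_laplacian L \<Longrightarrow> transpose L = L"
  by (auto simp: is_graph_laplacian_def laplacian_of_def transpose_def vec_eq_iff)

declare transpose_matrix_vector [simp del]

(* H stands for G(s0)^-1, Lambda for Lambda_k and lam for lambda_(k+1); then B = G^-1 + f L,
   T is T_k, and Q is the orthogonal projection onto ker V^T. *)
locale reduced_order_model =
  fixes V :: "complex^'k::finite^'n::finite"
    and L H :: "complex^'n^'n" and \<Lambda> :: "complex^'k^'k"
    and f :: complex and M\<^sub>2 lam :: real
  assumes adjoint_V: "\<And>x y. (V *v x) \<bullet> y = x \<bullet> (transpose V *v y)"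
    and transpose_V_V: "transpose V ** V = mat 1"
    and L_V: "L ** V = V ** \<Lambda>"
    and transpose_V_L: "transpose V ** L = \<Lambda> ** transpose V"
    and norm_H_le: "\<And>x. norm (H *v x) \<le> M\<^sub>2 * norm x"
    and norm_L_ge: "\<And>z. transpose V *v z = 0 \<Longrightarrow> lam * norm z \<le> norm (L *v z)"
    and A_invertible: "invertible (transpose V ** H ** V + cscale f \<Lambda>)"
begin

definition "A = transpose V ** H ** V + cscale f \<Lambda>"
definition "B = H + cscale f L"
definition "T = V ** matrix_inv A ** transpose V"
definition "Q = mat 1 - V ** transpose V"
definition "gap = cmod f * lam - M\<^sub>2 - spec_norm T * M\<^sub>2 ^ 2"

lemma M\<^sub>2_nonneg: "0 \<le> M\<^sub>2"
proof -
  have "0 < norm (axis undefined 1 :: complex^'n)"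
    by simp
  moreover have "0 \<le> M\<^sub>2 * norm (axis undefined 1 :: complex^'n)"
    using norm_H_le norm_ge_zero order_trans by blast
  ultimately show ?thesis
    by (simp add: zero_le_mult_iff)
qed

lemma transpose_V_V_mv [simp]: "transpose V *v (V *v u) = u"
  by (simp add: matrix_vector_mul_assoc transpose_V_V)

lemma L_V_mv: "L *v (V *v u) = V *v (\<Lambda> *v u)"
  by (metis L_V matrix_vector_mul_assoc)

lemma transpose_V_L_mv: "transpose V *v (L *v z) = \<Lambda> *v (transpose V *v z)"
  by (metis transpose_V_L matrix_vector_mul_assoc)

lemma B_mv: "B *v y = H *v y + f *s (L *v y)"
  by (simp add: B_def matrix_vector_mult_add_rdistrib cscale_mv)

lemma A_mv: "A *v u = transpose V *v (H *v (V *v u)) + f *s (\<Lambda> *v u)"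
  by (simp add: A_def matrix_vector_mult_add_rdistrib cscale_mv matrix_vector_mul_assoc
      matrix_mul_assoc)

lemma A_matrix_inv_mv [simp]: "A *v (matrix_inv A *v u) = u"
  using matrix_inv_right[OF A_invertible[folded A_def]] by (simp add: matrix_vector_mul_assoc)

lemma matrix_inv_A_mv [simp]: "matrix_inv A *v (A *v u) = u"
  using matrix_inv_left[OF A_invertible[folded A_def]] by (simp add: matrix_vector_mul_assoc)

lemma transpose_V_B_V_mv: "transpose V *v (B *v (V *v u)) = A *v u"
  by (simp add: A_mv B_mv L_V_mv vec.add vec.scale)

lemma T_mv: "T *v w = V *v (matrix_inv A *v (transpose V *v w))"
  by (simp add: T_def matrix_vector_mul_assoc matrix_mul_assoc)

lemma transpose_V_B_T_mv: "transpose V *v (B *v (T *v w)) = transpose V *v w"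
  by (simp add: T_mv transpose_V_B_V_mv)

lemma Q_mv: "Q *v y = y - V *v (transpose V *v y)"
  by (simp add: Q_def matrix_vector_mult_diff_rdistrib matrix_vector_mul_assoc)

lemma transpose_V_Q_mv [simp]: "transpose V *v (Q *v y) = 0"
  by (simp add: Q_mv vec.diff)

lemma Q_V_mv [simp]: "Q *v (V *v u) = 0"
  by (simp add: Q_mv)

lemma Q_mv_ker: "transpose V *v y = 0 \<Longrightarrow> Q *v y = y"
  by (simp add: Q_mv)

lemma norm_Q_mv_le: "norm (Q *v y) \<le> norm y"
proof -
  let ?p = "V *v (transpose V *v y)"
  have "orthogonal ?p (Q *v y)"
    by (simp add: orthogonal_def adjoint_V)
  then have "norm (?p + Q *v y) ^ 2 = norm ?p ^ 2 + norm (Q *v y) ^ 2"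
    by (rule norm_add_Pythagorean)
  moreover have "?p + Q *v y = y"
    by (simp add: Q_mv)
  ultimately have "norm (Q *v y) ^ 2 \<le> norm y ^ 2"
    by simp
  then show ?thesis
    by (rule power2_le_imp_le) simp
qed

lemma spec_norm_T_M\<^sub>2_nonneg: "0 \<le> spec_norm T * M\<^sub>2"
  by (simp add: spec_norm_nonneg M\<^sub>2_nonneg)

lemma Q_L_T_mv [simp]: "Q *v (L *v (T *v w)) = 0"
  by (simp add: T_mv L_V_mv)

lemma Q_L_mv_ker: "transpose V *v z = 0 \<Longrightarrow> Q *v (L *v z) = L *v z"
  by (simp add: Q_mv_ker transpose_V_L_mv)

lemma transpose_V_B_mv_ker:
  "transpose V *v z = 0 \<Longrightarrow> transpose V *v (B *v z) = transpose V *v (H *v z)"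
  by (simp add: B_mv vec.add vec.scale transpose_V_L_mv)

lemma norm_H_T_mv_le: "norm (H *v (T *v w)) \<le> spec_norm T * M\<^sub>2 * norm w"
proof -
  have "norm (H *v (T *v w)) \<le> M\<^sub>2 * norm (T *v w)"
    by (rule norm_H_le)
  also have "\<dots> \<le> M\<^sub>2 * (spec_norm T * norm w)"
    by (rule mult_left_mono[OF norm_mv_le_spec_norm M\<^sub>2_nonneg])
  finally show ?thesis
    by (simp add: ac_simps)
qed

lemma norm_T_H_mv_le: "norm (T *v (H *v y)) \<le> spec_norm T * M\<^sub>2 * norm y"
proof -
  have "norm (T *v (H *v y)) \<le> spec_norm T * norm (H *v y)"
    by (rule norm_mv_le_spec_norm)
  also have "\<dots> \<le> spec_norm T * (M\<^sub>2 * norm y)"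
    by (rule mult_left_mono[OF norm_H_le spec_norm_nonneg])
  finally show ?thesis
    by (simp add: ac_simps)
qed

lemma ker_transpose_V_B:
  assumes "transpose V *v (B *v x) = 0"
  shows "x = Q *v x - T *v (H *v (Q *v x))"
proof -
  define u where "u = transpose V *v x"
  have x: "x = V *v u + Q *v x"
    by (simp add: Q_mv u_def)
  have "transpose V *v (B *v (V *v u + Q *v x)) = 0"
    using assms x by simp
  then have "A *v u = - (transpose V *v (H *v (Q *v x)))"
    by (simp add: vec.add transpose_V_B_V_mv transpose_V_B_mv_ker eq_neg_iff_add_eq_0)
  then have "u = matrix_inv A *v - (transpose V *v (H *v (Q *v x)))"
    by (metis matrix_inv_A_mv)
  then have "V *v u = - (T *v (H *v (Q *v x)))"
    by (simp add: T_mv vec.neg)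
  then show ?thesis
    using x by simp
qed

lemma norm_B_mv_schur_ge:
  assumes z: "transpose V *v z = 0"
  shows "gap * norm z \<le> norm (B *v (z - T *v (H *v z)))"
proof -
  let ?x = "z - T *v (H *v z)"
  let ?r = "Q *v (H *v (T *v (H *v z))) - Q *v (H *v z)"
  have "transpose V *v (B *v ?x) = 0"
    using z by (simp add: vec.diff transpose_V_B_mv_ker transpose_V_B_T_mv)
  then have "B *v ?x = Q *v (B *v ?x)"
    by (simp add: Q_mv_ker)
  also have "\<dots> = f *s (L *v z) - ?r"
    using Q_L_mv_ker[OF z] by (simp add: B_mv vec.add vec.diff vec.scale algebra_simps)
  finally have Bx: "B *v ?x = f *s (L *v z) - ?r" .
  have "cmod f * lam * norm z \<le> norm (f *s (L *v z))"
    using mult_left_mono[OF norm_L_ge[OF z], of "cmod f"]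
    by (simp add: norm_smult_complex_vec mult.assoc)
  moreover have "norm ?r \<le> spec_norm T * M\<^sub>2 * (M\<^sub>2 * norm z) + M\<^sub>2 * norm z"
  proof -
    have "norm (Q *v (H *v (T *v (H *v z)))) \<le> spec_norm T * M\<^sub>2 * norm (H *v z)"
      using norm_Q_mv_le norm_H_T_mv_le order_trans by blast
    also have "\<dots> \<le> spec_norm T * M\<^sub>2 * (M\<^sub>2 * norm z)"
      using norm_H_le spec_norm_T_M\<^sub>2_nonneg by (rule mult_left_mono)
    finally show ?thesis
      using norm_triangle_ineq4[of "Q *v (H *v (T *v (H *v z)))" "Q *v (H *v z)"] norm_Q_mv_le[of "H *v z"]
        norm_H_le[of z] by linarith
  qed
  moreover have "norm (f *s (L *v z)) - norm ?r \<le> norm (B *v ?x)"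
    unfolding Bx by (rule norm_triangle_ineq2)
  moreover have "gap * norm z
      = cmod f * lam * norm z - (spec_norm T * M\<^sub>2 * (M\<^sub>2 * norm z) + M\<^sub>2 * norm z)"
    by (simp add: gap_def power2_eq_square algebra_simps)
  ultimately show ?thesis
    by linarith
qed

lemma norm_residual_le: "norm (w - B *v (T *v w)) \<le> (1 + spec_norm T * M\<^sub>2) * norm w"
proof -
  have "transpose V *v (w - B *v (T *v w)) = 0"
    by (simp add: vec.diff transpose_V_B_T_mv)
  then have "w - B *v (T *v w) = Q *v (w - B *v (T *v w))"
    by (simp add: Q_mv_ker)
  also have "\<dots> = Q *v w - Q *v (H *v (T *v w))"
    by (simp add: B_mv vec.add vec.diff vec.scale)
  finally have "norm (w - B *v (T *v w)) \<le> norm (Q *v w) + norm (Q *v (H *v (T *v w)))"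
    by (metis norm_triangle_ineq4)
  then show ?thesis
    using norm_Q_mv_le[of w] norm_Q_mv_le[of "H *v (T *v w)"] norm_H_T_mv_le[of w]
    by (simp add: algebra_simps)
qed

lemma norm_ker_transpose_V_B_le:
  assumes gap: "0 \<le> gap" and ker: "transpose V *v (B *v x) = 0"
  shows "gap * norm x \<le> (1 + spec_norm T * M\<^sub>2) * norm (B *v x)"
proof -
  have x: "x = Q *v x - T *v (H *v (Q *v x))"
    using ker by (rule ker_transpose_V_B)
  have "norm x \<le> (1 + spec_norm T * M\<^sub>2) * norm (Q *v x)"
    using norm_triangle_ineq4[of "Q *v x" "T *v (H *v (Q *v x))"] norm_T_H_mv_le[of "Q *v x"] x
    by (simp add: algebra_simps)
  then have "gap * norm x \<le> gap * ((1 + spec_norm T * M\<^sub>2) * norm (Q *v x))"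
    using gap by (rule mult_left_mono)
  also have "\<dots> = (1 + spec_norm T * M\<^sub>2) * (gap * norm (Q *v x))"
    by (simp only: ac_simps)
  also have "\<dots> \<le> (1 + spec_norm T * M\<^sub>2) * norm (B *v x)"
    using norm_B_mv_schur_ge[of "Q *v x"] x spec_norm_T_M\<^sub>2_nonneg
    by (intro mult_left_mono) auto
  finally show ?thesis .
qed

theorem B_invertible:
  assumes "0 < gap"
  shows "invertible B"
proof -
  have "inj ((*v) B)"
  proof (rule injI)
    fix x y
    assume "B *v x = B *v y"
    then have "B *v (x - y) = 0"
      by (simp add: vec.diff)
    then have "gap * norm (x - y) \<le> 0"
      using norm_ker_transpose_V_B_le[of "x - y"] assms by simp
    then show "x = y"
      using assms by (simp add: mult_le_0_iff)
  qed
  then show ?thesis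
    using matrix_left_invertible_injective invertible_left_inverse by blast
qed

theorem spec_norm_inverse_diff_le:
  assumes gap: "0 < gap"
  shows "spec_norm (matrix_inv B - T) \<le> (spec_norm T * M\<^sub>2 + 1) ^ 2 / gap"
proof (rule spec_norm_le)
  fix w
  let ?x = "(matrix_inv B - T) *v w"
  have Bx: "B *v ?x = w - B *v (T *v w)"
    using matrix_inv_right[OF B_invertible[OF gap]]
    by (simp add: matrix_vector_mult_diff_rdistrib vec.diff matrix_vector_mul_assoc)
  then have "transpose V *v (B *v ?x) = 0"
    by (simp add: vec.diff transpose_V_B_T_mv)
  then have "gap * norm ?x \<le> (1 + spec_norm T * M\<^sub>2) * norm (B *v ?x)"
    using gap by (intro norm_ker_transpose_V_B_le) simp_all
  also have "\<dots> \<le> (1 + spec_norm T * M\<^sub>2) * ((1 + spec_norm T * M\<^sub>2) * norm w)"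
    unfolding Bx using norm_residual_le spec_norm_T_M\<^sub>2_nonneg by (intro mult_left_mono) auto
  finally show "norm ?x \<le> (spec_norm T * M\<^sub>2 + 1) ^ 2 / gap * norm w"
    using gap by (simp add: field_simps power2_eq_square)
qed

end

lemma reduced_order_model_eigenbasis:
  fixes L :: "real^'n::finite^'n" and v :: "nat \<Rightarrow> real^'n" and lam :: "nat \<Rightarrow> real"
    and ord :: "'k::finite \<Rightarrow> nat"
  assumes L_sym: "transpose L = L"
    and eig: "\<And>i. i \<in> {1..CARD('n)} \<Longrightarrow> L *v v i = lam i *s v i"
    and orth: "\<And>i j. i \<in> {1..CARD('n)} \<Longrightarrow> j \<in> {1..CARD('n)} \<Longrightarrow>
                  v i \<bullet> v j = (if i = j then 1 else 0)"
    and sorted: "\<And>i j. i \<in> {1..CARD('n)} \<Longrightarrow> j \<in> {1..CARD('n)} \<Longrightarrow> i \<le> j \<Longrightarrow> lam i \<le> lam j"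
    and k_lt: "CARD('k) < CARD('n)"
    and ord_bij: "bij_betw ord (UNIV :: 'k set) {1..CARD('k)}"
    and reduced_invertible: "invertible (transpose (cmat_of_real (\<chi> r j. v (ord j) $ r :: real^'k^'n))
                   ** cdiag h ** cmat_of_real (\<chi> r j. v (ord j) $ r :: real^'k^'n)
                 + cscale c (cdiag (\<lambda>j. complex_of_real (lam (ord j)))))"
  shows "reduced_order_model (cmat_of_real (\<chi> r j. v (ord j) $ r :: real^'k^'n)) (cmat_of_real L)
    (cdiag h) (cdiag (\<lambda>j. complex_of_real (lam (ord j)))) c (MAX i. cmod (h i)) (lam (CARD('k) + 1))"
proof -
  define U where "U = (\<chi> r j. v (ord j) $ r :: real^'k^'n)"
  have ord_range: "ord j \<in> {1..CARD('n)}" for j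
    using bij_betwE[OF ord_bij] k_lt by fastforce
  have ord_inj: "ord i = ord j \<longleftrightarrow> i = j" for i j
    using ord_bij by (auto simp: bij_betw_def inj_on_def)
  have U_orth: "transpose U ** U = mat 1"
    unfolding U_def by (rule transpose_columns_mult_self) (simp add: orth[OF ord_range ord_range] ord_inj)
  have L_U: "cmat_of_real L ** cmat_of_real U
      = cmat_of_real U ** cdiag (\<lambda>j. complex_of_real (lam (ord j)))"
    unfolding U_def by (rule eigenvector_columns) (rule eig[OF ord_range])
  have L_gap: "lam (CARD('k) + 1) * norm a \<le> norm (L *v a)" if "transpose U *v a = 0" for a
  proof (rule norm_mv_ge_eigenvalue[OF L_sym eig orth sorted k_lt])
    fix i
    assume "i \<in> {1..CARD('k)}"
    then obtain j where "i = ord j"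
      using bij_betw_imp_surj_on[OF ord_bij] by blast
    then show "v i \<bullet> a = 0"
      using that by (simp add: U_def transpose_columns_mv vec_eq_iff inner_vec_def)
  qed
  show ?thesis
    unfolding U_def[symmetric]
  proof
    show "transpose (cmat_of_real U) ** cmat_of_real U = mat 1"
      by (simp add: transpose_cmat_of_real cmat_of_real_mult[symmetric] U_orth cmat_of_real_mat_1)
    show "transpose (cmat_of_real U) ** cmat_of_real L
        = cdiag (\<lambda>j. complex_of_real (lam (ord j))) ** transpose (cmat_of_real U)"
      using arg_cong[OF L_U, of transpose]
      by (simp add: matrix_transpose_mul transpose_cmat_of_real L_sym transpose_cdiag)
    show "lam (CARD('k) + 1) * norm z \<le> norm (cmat_of_real L *v z)"
      if "transpose (cmat_of_real U) *v z = 0" for z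
      using L_gap that by (intro cmat_of_real_mv_lower_bound[where K = "transpose U"])
        (simp_all add: transpose_cmat_of_real)
  qed (simp_all add: cmat_of_real_adjoint L_U norm_cdiag_mv_le reduced_invertible[folded U_def])
qed

theorem theorem1:
  fixes L :: "real^'n::finite^'n"
    and lam :: "nat \<Rightarrow> real"
    and v :: "nat \<Rightarrow> real^'n"
    and ord :: "'k::finite \<Rightarrow> nat"
    and g :: "'n \<Rightarrow> complex \<Rightarrow> complex"
    and f :: "complex \<Rightarrow> complex"
    and s0 :: complex
  assumes n2: "CARD('n) \<ge> 2"
    and k_lt: "CARD('k) < CARD('n)"
    and lap: "is_graph_laplacian L"
    and eig: "\<And>i. i \<in> {1..CARD('n)} \<Longrightarrow> L *v v i = lam i *s v i"
    and orth: "\<And>i j. i \<in> {1..CARD('n)} \<Longrightarrow> j \<in> {1..CARD('n)} \<Longrightarrow>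
                  v i \<bullet> v j = (if i = j then 1 else 0)"
    and sorted: "\<And>i j. i \<in> {1..CARD('n)} \<Longrightarrow> j \<in> {1..CARD('n)} \<Longrightarrow> i \<le> j \<Longrightarrow> lam i \<le> lam j"
    and ord_bij: "bij_betw ord (UNIV :: 'k set) {1..CARD('k)}"
    and g_nz: "\<And>i. g i s0 \<noteq> 0"
    and Tk_fin: "invertible (transpose (cmat_of_real (\<chi> r j. v (ord j) $ r :: real^'k^'n))
                   ** cdiag (\<lambda>i. inverse (g i s0))
                   ** cmat_of_real (\<chi> r j. v (ord j) $ r :: real^'k^'n)
                 + cscale (f s0) (cdiag (\<lambda>j. complex_of_real (lam (ord j)))))"
    and gap: "cmod (f s0) * lam (CARD('k) + 1) >
              (MAX i. cmod (inverse (g i s0)))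
              + spec_norm (cmat_of_real (\<chi> r j. v (ord j) $ r :: real^'k^'n)
                  ** matrix_inv (transpose (cmat_of_real (\<chi> r j. v (ord j) $ r :: real^'k^'n))
                   ** cdiag (\<lambda>i. inverse (g i s0))
                   ** cmat_of_real (\<chi> r j. v (ord j) $ r :: real^'k^'n)
                   + cscale (f s0) (cdiag (\<lambda>j. complex_of_real (lam (ord j)))))
                  ** transpose (cmat_of_real (\<chi> r j. v (ord j) $ r :: real^'k^'n)))
                * (MAX i. cmod (inverse (g i s0)))^2"
  shows "invertible (mat 1 + cdiag (\<lambda>i. g i s0) ** cscale (f s0) (cmat_of_real L)) \<and>
         spec_norm (matrix_inv (mat 1 + cdiag (\<lambda>i. g i s0) ** cscale (f s0) (cmat_of_real L))
                      ** cdiag (\<lambda>i. g i s0)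
                    - cmat_of_real (\<chi> r j. v (ord j) $ r :: real^'k^'n)
                  ** matrix_inv (transpose (cmat_of_real (\<chi> r j. v (ord j) $ r :: real^'k^'n))
                   ** cdiag (\<lambda>i. inverse (g i s0))
                   ** cmat_of_real (\<chi> r j. v (ord j) $ r :: real^'k^'n)
                   + cscale (f s0) (cdiag (\<lambda>j. complex_of_real (lam (ord j)))))
                  ** transpose (cmat_of_real (\<chi> r j. v (ord j) $ r :: real^'k^'n)))
         \<le> (spec_norm (cmat_of_real (\<chi> r j. v (ord j) $ r :: real^'k^'n)
                  ** matrix_inv (transpose (cmat_of_real (\<chi> r j. v (ord j) $ r :: real^'k^'n))
                   ** cdiag (\<lambda>i. inverse (g i s0))
                   ** cmat_of_real (\<chi> r j. v (ord j) $ r :: real^'k^'n)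
                   + cscale (f s0) (cdiag (\<lambda>j. complex_of_real (lam (ord j)))))
                  ** transpose (cmat_of_real (\<chi> r j. v (ord j) $ r :: real^'k^'n)))
              * (MAX i. cmod (inverse (g i s0))) + 1)^2
           / (cmod (f s0) * lam (CARD('k) + 1) - (MAX i. cmod (inverse (g i s0)))
              - spec_norm (cmat_of_real (\<chi> r j. v (ord j) $ r :: real^'k^'n)
                  ** matrix_inv (transpose (cmat_of_real (\<chi> r j. v (ord j) $ r :: real^'k^'n))
                   ** cdiag (\<lambda>i. inverse (g i s0))
                   ** cmat_of_real (\<chi> r j. v (ord j) $ r :: real^'k^'n)
                   + cscale (f s0) (cdiag (\<lambda>j. complex_of_real (lam (ord j)))))
                  ** transpose (cmat_of_real (\<chi> r j. v (ord j) $ r :: real^'k^'n)))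
                * (MAX i. cmod (inverse (g i s0)))^2)"
proof -
  interpret reduced_order_model "cmat_of_real (\<chi> r j. v (ord j) $ r :: real^'k^'n)" "cmat_of_real L"
    "cdiag (\<lambda>i. inverse (g i s0))" "cdiag (\<lambda>j. complex_of_real (lam (ord j)))" "f s0"
    "MAX i. cmod (inverse (g i s0))" "lam (CARD('k) + 1)"
    using graph_laplacian_symmetric[OF lap] eig orth sorted k_lt ord_bij Tk_fin
    by (rule reduced_order_model_eigenbasis)
  have "cdiag (\<lambda>i. g i s0) ** cdiag (\<lambda>i. inverse (g i s0)) = mat 1"
    unfolding cdiag_mult by (simp add: g_nz cdiag_def mat_def vec_eq_iff)
  note feedback = feedback_inverse[OF this B_invertible[unfolded B_def]]
  have "0 < gap"
    using gap unfolding gap_def T_def A_def by simp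
  then show ?thesis
    using feedback spec_norm_inverse_diff_le unfolding B_def T_def A_def gap_def by simp
qed

end
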